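(* For every $n\in\mathbb{N}$, the directed arrowhead $\vec{\mathcal{AT}}_n$ has oriented diameter $\vec{D}_n=\sqrt{N}-1=2^n-1$, where $N=4^n$. Moreover, the number of vertices at directed distance $\vec{D}_n$ from $(0,0)$ is $3$ when $n=1$ and $6$ when $n>1$.
   Context: For $n\in\mathbb{N}$ let $G_n=\mathbb{Z}_{2^n}\times\mathbb{Z}_{2^n}$ (additive group), $N=|G_n|=4^n$. Let $S^+=\{(-1,-1),(1,0),(0,1)\}$. The directed arrowhead $\vec{\mathcal{AT}}_n$ is the Cayley digraph $\Gamma(G_n,S^+)$: vertex set $G_n$, with an arc $u\to u+s$ for each $u\in G_n$ and $s\in S^+$ (arithmetic modulo $2^n$). The oriented diameter is the maximum, over ordered pairs $(u,v)$ of vertices, of the length of a shortest directed path from $u$ to $v$. *)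

theory Defs
  imports Main "HOL-Library.Extended_Nat"
begin

text \<open>Vertices of G_n = Z_{2^n} x Z_{2^n}, represented by residues 0..2^n-1.\<close>
definition AT_vertices :: "nat \<Rightarrow> (int \<times> int) set" where
  "AT_vertices n = {(a, b). 0 \<le> a \<and> a < 2 ^ n \<and> 0 \<le> b \<and> b < 2 ^ n}"

definition S_plus :: "(int \<times> int) set" where
  "S_plus = {(-1, -1), (1, 0), (0, 1)}"

definition AT_arc :: "nat \<Rightarrow> int \<times> int \<Rightarrow> int \<times> int \<Rightarrow> bool" where
  "AT_arc n u v \<longleftrightarrow> u \<in> AT_vertices n \<and>
     (\<exists>s \<in> S_plus. v = ((fst u + fst s) mod 2 ^ n, (snd u + snd s) mod 2 ^ n))"

text \<open>Directed distance: length of a shortest directed walk (infinity if none).\<close>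
definition AT_dist :: "nat \<Rightarrow> int \<times> int \<Rightarrow> int \<times> int \<Rightarrow> enat" where
  "AT_dist n u v = (INF k \<in> {k::nat. (AT_arc n ^^ k) u v}. enat k)"

definition AT_oriented_diameter :: "nat \<Rightarrow> enat" where
  "AT_oriented_diameter n = (SUP u \<in> AT_vertices n. SUP v \<in> AT_vertices n. AT_dist n u v)"

end

theory Submission
  imports Defs
begin

text \<open>A walk from u with a steps (1,0), b steps (0,1) and c steps (-1,-1), in any order, ends at
  u + (a - c, b - c); so the distance to an offset (x, y) is the least a + b + c realising it
  modulo M = 2^n. Reducing c modulo M leaves three candidates; for y \<le> x they have lengths
  x + y, M + x - 2y and 2M - 2x + y. These sum to 3M, and as 3 does not divide M their minimum is
  at most M - 1. It equals M - 1 exactly at three lattice points next to (2M/3, M/3) and at their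
  mirror images; for M = 2 three of these six points fall outside the torus.\<close>

definition AT_shift :: "nat \<Rightarrow> int \<times> int \<Rightarrow> int \<Rightarrow> int \<Rightarrow> int \<Rightarrow> int \<times> int" where
  "AT_shift n u a b c = ((fst u + a - c) mod 2 ^ n, (snd u + b - c) mod 2 ^ n)"

lemma AT_vertices_eq: "AT_vertices n = {0..<2 ^ n} \<times> {0..<2 ^ n}"
  unfolding AT_vertices_def by auto

lemma AT_shift_in_vertices: "AT_shift n u a b c \<in> AT_vertices n"
  by (simp add: AT_shift_def AT_vertices_eq)

lemma AT_shift_zero: "u \<in> AT_vertices n \<Longrightarrow> AT_shift n u 0 0 0 = u"
  by (cases u) (simp add: AT_shift_def AT_vertices_eq)

lemma AT_shift_shift:
  "AT_shift n (AT_shift n u a b c) a' b' c' = AT_shift n u (a + a') (b + b') (c + c')"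
proof -
  have "(p mod 2 ^ n + q - r) mod 2 ^ n = (p + q - r) mod (2 ^ n :: int)" for p q r :: int
    by (metis add_diff_eq mod_add_left_eq)
  then show ?thesis
    by (simp add: AT_shift_def algebra_simps)
qed

lemma AT_arc_iff:
  "AT_arc n w v \<longleftrightarrow> w \<in> AT_vertices n \<and>
     (v = AT_shift n w 1 0 0 \<or> v = AT_shift n w 0 1 0 \<or> v = AT_shift n w 0 0 1)"
  by (auto simp: AT_arc_def AT_shift_def S_plus_def)

lemma AT_arc_from_shift:
  "AT_arc n (AT_shift n u a b c) v \<longleftrightarrow>
    v = AT_shift n u (a + 1) b c \<or> v = AT_shift n u a (b + 1) c \<or> v = AT_shift n u a b (c + 1)"
  by (simp add: AT_arc_iff AT_shift_shift AT_shift_in_vertices)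

lemma AT_relpow_iff:
  assumes u: "u \<in> AT_vertices n"
  shows "(AT_arc n ^^ k) u v \<longleftrightarrow>
    (\<exists>a b c. 0 \<le> a \<and> 0 \<le> b \<and> 0 \<le> c \<and> a + b + c = int k \<and> v = AT_shift n u a b c)"
proof (induction k arbitrary: v)
  case 0
  have zero: "a = 0 \<and> b = 0 \<and> c = 0" if "0 \<le> a" "0 \<le> b" "0 \<le> c" "a + b + c = 0" for a b c :: int
    using that by linarith
  have "(AT_arc n ^^ 0) u v \<longleftrightarrow> v = AT_shift n u 0 0 0"
    using AT_shift_zero[OF u] by auto
  also have "\<dots> \<longleftrightarrow> (\<exists>a b c. 0 \<le> a \<and> 0 \<le> b \<and> 0 \<le> c \<and> a + b + c = int 0 \<and> v = AT_shift n u a b c)"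
    using zero by (metis of_nat_0 order_refl add_0)
  finally show ?case .
next
  case (Suc k)
  show ?case
  proof
    assume "(AT_arc n ^^ Suc k) u v"
    then obtain w where "(AT_arc n ^^ k) u w" and wv: "AT_arc n w v"
      by (rule relpowp_Suc_E)
    then obtain a b c where abc: "0 \<le> a" "0 \<le> b" "0 \<le> c" "a + b + c = int k"
      and w: "w = AT_shift n u a b c"
      using Suc.IH by blast
    from wv consider "v = AT_shift n u (a + 1) b c" | "v = AT_shift n u a (b + 1) c"
      | "v = AT_shift n u a b (c + 1)"
      unfolding w AT_arc_from_shift by blast
    then show "\<exists>a b c. 0 \<le> a \<and> 0 \<le> b \<and> 0 \<le> c \<and> a + b + c = int (Suc k) \<and> v = AT_shift n u a b c"
    proof cases
      case 1
      then show ?thesis using abc by (intro exI[of _ "a + 1"] exI[of _ b] exI[of _ c]) simp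
    next
      case 2
      then show ?thesis using abc by (intro exI[of _ a] exI[of _ "b + 1"] exI[of _ c]) simp
    next
      case 3
      then show ?thesis using abc by (intro exI[of _ a] exI[of _ b] exI[of _ "c + 1"]) simp
    qed
  next
    assume "\<exists>a b c. 0 \<le> a \<and> 0 \<le> b \<and> 0 \<le> c \<and> a + b + c = int (Suc k) \<and> v = AT_shift n u a b c"
    then obtain a b c where abc: "0 \<le> a" "0 \<le> b" "0 \<le> c" "a + b + c = int k + 1"
      and v: "v = AT_shift n u a b c"
      by auto
    have step: "(AT_arc n ^^ Suc k) u v"
      if "0 \<le> a'" "0 \<le> b'" "0 \<le> c'" "a' + b' + c' = int k" "AT_arc n (AT_shift n u a' b' c') v"
      for a' b' c'
      using Suc.IH that by (blast intro: relpowp_Suc_I)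
    have "0 < a \<or> 0 < b \<or> 0 < c"
      using abc by linarith
    then show "(AT_arc n ^^ Suc k) u v"
    proof (elim disjE)
      assume "0 < a"
      then show ?thesis
        using abc by (intro step[of "a - 1" b c]) (auto simp: v AT_arc_from_shift)
    next
      assume "0 < b"
      then show ?thesis
        using abc by (intro step[of a "b - 1" c]) (auto simp: v AT_arc_from_shift)
    next
      assume "0 < c"
      then show ?thesis
        using abc by (intro step[of a b "c - 1"]) (auto simp: v AT_arc_from_shift)
    qed
  qed
qed

definition lattice_reach :: "int \<Rightarrow> int \<Rightarrow> int \<Rightarrow> int \<Rightarrow> bool" where
  "lattice_reach M x y k \<longleftrightarrow>
    (\<exists>a b c. 0 \<le> a \<and> 0 \<le> b \<and> 0 \<le> c \<and> a + b + c = k \<and> (a - c) mod M = x \<and> (b - c) mod M = y)"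

lemma AT_relpow_iff_lattice_reach:
  assumes u: "u \<in> AT_vertices n" and v: "v \<in> AT_vertices n"
  shows "(AT_arc n ^^ k) u v \<longleftrightarrow>
    lattice_reach (2 ^ n) ((fst v - fst u) mod 2 ^ n) ((snd v - snd u) mod 2 ^ n) (int k)"
proof -
  have v_mod: "fst v mod 2 ^ n = fst v" "snd v mod 2 ^ n = snd v"
    using v by (auto simp: AT_vertices_eq)
  have coord: "q = (p + a - c) mod 2 ^ n \<longleftrightarrow> (a - c) mod 2 ^ n = (q - p) mod 2 ^ n"
    if "q mod 2 ^ n = q" for p q a c :: int
  proof -
    have "q = (p + a - c) mod 2 ^ n \<longleftrightarrow> q mod 2 ^ n = (p + a - c) mod 2 ^ n"
      using that by simp
    also have "\<dots> \<longleftrightarrow> (q - p) mod 2 ^ n = (a - c) mod 2 ^ n"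
      by (simp add: mod_eq_dvd_iff algebra_simps)
    finally show ?thesis
      by auto
  qed
  have "v = AT_shift n u a b c \<longleftrightarrow>
      (a - c) mod 2 ^ n = (fst v - fst u) mod 2 ^ n \<and> (b - c) mod 2 ^ n = (snd v - snd u) mod 2 ^ n" for a b c
    using coord[OF v_mod(1)] coord[OF v_mod(2)] by (simp add: AT_shift_def prod_eq_iff)
  then show ?thesis
    unfolding AT_relpow_iff[OF u] lattice_reach_def by auto
qed

lemma lattice_reach_swap: "lattice_reach M x y k \<Longrightarrow> lattice_reach M y x k"
  unfolding lattice_reach_def by (metis add.commute add.left_commute)

lemma lattice_reach_nonneg: "lattice_reach M x y k \<Longrightarrow> 0 \<le> k"
  unfolding lattice_reach_def by auto

lemma lattice_reach_witnesses:
  assumes "0 \<le> y" "y \<le> x" "x < M"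
  shows "lattice_reach M x y (x + y)" "lattice_reach M x y (M + x - 2 * y)"
    "lattice_reach M x y (2 * M - 2 * x + y)"
proof -
  have x_mod: "x mod M = x" "(x - M) mod M = x" and y_mod: "y mod M = y" "(y - M) mod M = y"
    using assms by simp_all
  show "lattice_reach M x y (x + y)"
    unfolding lattice_reach_def using assms x_mod y_mod
    by (intro exI[of _ x] exI[of _ y] exI[of _ 0]) simp
  show "lattice_reach M x y (M + x - 2 * y)"
    unfolding lattice_reach_def using assms x_mod y_mod
    by (intro exI[of _ "x - y"] exI[of _ 0] exI[of _ "M - y"]) simp
  show "lattice_reach M x y (2 * M - 2 * x + y)"
    unfolding lattice_reach_def using assms x_mod y_mod
    by (intro exI[of _ 0] exI[of _ "M + y - x"] exI[of _ "M - x"]) simp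
qed

definition lattice_dist :: "int \<Rightarrow> int \<Rightarrow> int \<Rightarrow> int" where
  "lattice_dist M x y = min (x + y) (min (M + max x y - 2 * min x y) (2 * M - 2 * max x y + min x y))"

lemma lattice_dist_ordered:
  "y \<le> x \<Longrightarrow> lattice_dist M x y = min (x + y) (min (M + x - 2 * y) (2 * M - 2 * x + y))"
  by (simp add: lattice_dist_def)

lemma lattice_dist_commute: "lattice_dist M x y = lattice_dist M y x"
  by (simp add: lattice_dist_def add.commute min.commute max.commute)

lemma lattice_dist_le_reach_ordered:
  assumes "0 \<le> y" "y \<le> x" "x < M" and "lattice_reach M x y k"
  shows "lattice_dist M x y \<le> k"
proof -
  obtain a b c where abc: "0 \<le> a" "0 \<le> b" "0 \<le> c" "a + b + c = k"
    and a: "(a - c) mod M = x" and b: "(b - c) mod M = y"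
    using assms(4) unfolding lattice_reach_def by blast
  define c' where "c' = c mod M"
  have c': "0 \<le> c'" "c' < M" "c' \<le> c"
    using assms abc unfolding c'_def by (simp_all add: zmod_le_nonneg_dividend)
  have reduce: "(z + c') mod M \<le> w" if "(w - c) mod M = z" "0 \<le> w" for z w
  proof -
    have "(z + c') mod M = w mod M"
      using that(1) unfolding c'_def by (metis mod_add_eq diff_add_cancel)
    also have "\<dots> \<le> w"
      using that(2) assms by (simp add: zmod_le_nonneg_dividend)
    finally show ?thesis .
  qed
  have wrap: "(z + c') mod M = (if z + c' < M then z + c' else z + c' - M)" if "0 \<le> z" "z < M" for z
    using that c' by (auto simp: mod_pos_pos_trivial intro: mod_pos_pos_trivial[of "z + c' - M" M, simplified])
  have "x + c' < M \<longrightarrow> y + c' < M"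
    using assms by linarith
  then show ?thesis
    unfolding lattice_dist_ordered[OF assms(2)]
    using reduce[OF a abc(1)] reduce[OF b abc(2)] wrap[of x] wrap[of y] assms abc c'
    by (auto split: if_splits)
qed

text \<open>Meant for 3 not dividing M: the second set is the case M mod 3 = 2.\<close>

definition far_points :: "int \<Rightarrow> (int \<times> int) set" where
  "far_points M = (let t = M div 3 in
     if M mod 3 = 1 then {(t, 2*t), (t, 2*t+1), (t+1, 2*t+1), (2*t, t), (2*t+1, t), (2*t+1, t+1)}
     else {(t, 2*t+1), (t+1, 2*t+1), (t+1, 2*t+2), (2*t+1, t), (2*t+1, t+1), (2*t+2, t+1)})"

lemma far_points_swap: "(x, y) \<in> far_points M \<longleftrightarrow> (y, x) \<in> far_points M"
  by (auto simp: far_points_def Let_def)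

lemma lattice_dist_le_ordered:
  assumes "0 \<le> y" "y \<le> x" "x < M" "\<not> 3 dvd M"
  shows "lattice_dist M x y \<le> M - 1"
proof (rule ccontr)
  assume "\<not> ?thesis"
  then have "M = 3 * y"
    using assms(2) unfolding lattice_dist_ordered[OF assms(2)] by linarith
  with assms(4) show False
    by simp
qed

lemma lattice_dist_eq_iff_ordered:
  assumes "0 \<le> y" "y \<le> x" "x < M" "\<not> 3 dvd M"
  shows "lattice_dist M x y = M - 1 \<longleftrightarrow> (x, y) \<in> far_points M"
proof -
  define t where "t = M div 3"
  have M: "M = 3 * t + 1 \<or> M = 3 * t + 2"
    using assms(4) unfolding t_def by presburger
  have "lattice_dist M x y = M - 1 \<longleftrightarrow> M - 1 \<le> x + y \<and> 2 * y \<le> x + 1 \<and> 2 * x \<le> M + 1 + y"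
    using lattice_dist_le_ordered[OF assms] unfolding lattice_dist_ordered[OF assms(2)] by linarith
  also have "\<dots> \<longleftrightarrow> (x, y) \<in> far_points M"
  proof
    assume far: "M - 1 \<le> x + y \<and> 2 * y \<le> x + 1 \<and> 2 * x \<le> M + 1 + y"
    then have "y = t \<or> y = t + 1"
      using M by linarith
    moreover have "x = 2 * t \<or> x = 2 * t + 1 \<or> x = 2 * t + 2"
      using far M \<open>y = t \<or> y = t + 1\<close> by linarith
    ultimately show "(x, y) \<in> far_points M"
      using far M unfolding far_points_def Let_def t_def[symmetric] by (elim disjE) auto
  qed (use M assms in \<open>auto simp: far_points_def Let_def t_def[symmetric]\<close>)
  finally show ?thesis .
qed

lemma lattice_reach_lattice_dist:
  assumes "0 \<le> x" "x < M" "0 \<le> y" "y < M"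
  shows "lattice_reach M x y (lattice_dist M x y)"
proof -
  have ordered: "lattice_reach M x y (lattice_dist M x y)" if "0 \<le> y" "y \<le> x" "x < M" for x y
    using lattice_reach_witnesses[OF that] that by (simp add: lattice_dist_ordered min_def)
  show ?thesis
    using ordered[of y x] ordered[of x y] lattice_reach_swap assms
    by (cases x y rule: le_cases) (auto simp: lattice_dist_commute[of M x y])
qed

lemma lattice_dist_nonneg:
  "0 \<le> x \<Longrightarrow> x < M \<Longrightarrow> 0 \<le> y \<Longrightarrow> y < M \<Longrightarrow> 0 \<le> lattice_dist M x y"
  using lattice_reach_nonneg lattice_reach_lattice_dist by blast

lemma lattice_dist_le_reach:
  assumes "0 \<le> x" "x < M" "0 \<le> y" "y < M" and reach: "lattice_reach M x y k"
  shows "lattice_dist M x y \<le> k"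
  using lattice_dist_le_reach_ordered[of y x M k] lattice_dist_le_reach_ordered[of x y M k]
    lattice_reach_swap[OF reach] assms
  by (cases x y rule: le_cases) (simp_all add: lattice_dist_commute[of M x y])

lemma lattice_dist_le:
  assumes "0 \<le> x" "x < M" "0 \<le> y" "y < M" "\<not> 3 dvd M"
  shows "lattice_dist M x y \<le> M - 1"
  using lattice_dist_le_ordered[of y x M] lattice_dist_le_ordered[of x y M] assms
  by (cases x y rule: le_cases) (simp_all add: lattice_dist_commute[of M x y])

lemma lattice_dist_eq_iff:
  assumes "0 \<le> x" "x < M" "0 \<le> y" "y < M" "\<not> 3 dvd M"
  shows "lattice_dist M x y = M - 1 \<longleftrightarrow> (x, y) \<in> far_points M"
  using lattice_dist_eq_iff_ordered[of y x M] lattice_dist_eq_iff_ordered[of x y M] assms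
  by (cases x y rule: le_cases) (simp_all add: lattice_dist_commute[of M x y] far_points_swap[of x y])

lemma far_points_subset:
  assumes "3 < M" "\<not> 3 dvd M"
  shows "far_points M \<subseteq> {0..<M} \<times> {0..<M}"
proof -
  have "M mod 3 = 1 \<and> M = 3 * (M div 3) + 1 \<or> M mod 3 = 2 \<and> M = 3 * (M div 3) + 2" "1 \<le> M div 3"
    using assms by presburger+
  then show ?thesis
    by (auto simp: far_points_def Let_def)
qed

lemma card_far_points:
  assumes "3 \<le> M"
  shows "card (far_points M) = 6"
proof -
  have "1 \<le> M div 3"
    using assms by simp
  then show ?thesis
    by (simp add: far_points_def Let_def)
qed

lemma AT_dist_eq_enatI:
  assumes "(AT_arc n ^^ k) u v" and "\<And>j. (AT_arc n ^^ j) u v \<Longrightarrow> k \<le> j"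
  shows "AT_dist n u v = enat k"
  unfolding AT_dist_def
proof (rule antisym)
  show "(INF j \<in> {j. (AT_arc n ^^ j) u v}. enat j) \<le> enat k"
    using assms(1) by (intro INF_lower2[of k]) auto
  show "enat k \<le> (INF j \<in> {j. (AT_arc n ^^ j) u v}. enat j)"
    using assms(2) by (intro INF_greatest) auto
qed

lemma AT_dist_eq_lattice_dist:
  assumes u: "u \<in> AT_vertices n" and v: "v \<in> AT_vertices n"
  shows "AT_dist n u v =
    enat (nat (lattice_dist (2 ^ n) ((fst v - fst u) mod 2 ^ n) ((snd v - snd u) mod 2 ^ n)))"
proof -
  define x y :: int where "x = (fst v - fst u) mod 2 ^ n" and "y = (snd v - snd u) mod 2 ^ n"
  have box: "0 \<le> x" "x < 2 ^ n" "0 \<le> y" "y < 2 ^ n"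
    by (simp_all add: x_def y_def)
  have walk_iff: "(AT_arc n ^^ j) u v \<longleftrightarrow> lattice_reach (2 ^ n) x y (int j)" for j
    unfolding x_def y_def by (rule AT_relpow_iff_lattice_reach[OF u v])
  have "(AT_arc n ^^ nat (lattice_dist (2 ^ n) x y)) u v"
    using lattice_reach_lattice_dist[OF box] lattice_dist_nonneg[OF box] by (simp add: walk_iff)
  moreover have "nat (lattice_dist (2 ^ n) x y) \<le> j" if "(AT_arc n ^^ j) u v" for j
    using lattice_dist_le_reach[OF box] that by (simp add: walk_iff nat_le_iff)
  ultimately show ?thesis
    unfolding x_def y_def by (rule AT_dist_eq_enatI)
qed

lemma three_not_dvd_two_power: "\<not> (3::int) dvd 2 ^ n"
proof
  assume "(3::int) dvd 2 ^ n"
  moreover have "coprime (3::int) (2 ^ n)"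
    by (simp add: coprime_power_right_iff)
  ultimately show False
    using coprime_common_divisor[of "3::int" "2 ^ n" 3] by auto
qed

lemma nat_two_power_minus_1: "nat (2 ^ n - 1 :: int) = 2 ^ n - 1"
  by (simp add: nat_diff_distrib nat_power_eq)

lemma AT_dist_le:
  assumes "u \<in> AT_vertices n" "v \<in> AT_vertices n"
  shows "AT_dist n u v \<le> enat (2 ^ n - 1)"
proof -
  have "lattice_dist (2 ^ n) ((fst v - fst u) mod 2 ^ n) ((snd v - snd u) mod 2 ^ n) \<le> 2 ^ n - 1"
    using three_not_dvd_two_power by (intro lattice_dist_le) auto
  then show ?thesis
    using nat_mono unfolding AT_dist_eq_lattice_dist[OF assms] nat_two_power_minus_1[symmetric]
    by fastforce
qed

lemma AT_dist_origin_eq_iff: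
  assumes v: "v \<in> AT_vertices n"
  shows "AT_dist n (0, 0) v = enat (2 ^ n - 1) \<longleftrightarrow> v \<in> far_points (2 ^ n)"
proof -
  have box: "0 \<le> fst v" "fst v < 2 ^ n" "0 \<le> snd v" "snd v < 2 ^ n"
    using v by (auto simp: AT_vertices_eq)
  have origin: "(0, 0) \<in> AT_vertices n"
    by (simp add: AT_vertices_eq)
  have "AT_dist n (0, 0) v = enat (nat (lattice_dist (2 ^ n) (fst v) (snd v)))"
    using AT_dist_eq_lattice_dist[OF origin v] box by simp
  also have "\<dots> = enat (2 ^ n - 1) \<longleftrightarrow> lattice_dist (2 ^ n) (fst v) (snd v) = 2 ^ n - 1"
    using lattice_dist_nonneg[OF box]
    unfolding nat_two_power_minus_1[symmetric] by (simp add: eq_nat_nat_iff)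
  also have "\<dots> \<longleftrightarrow> v \<in> far_points (2 ^ n)"
    using lattice_dist_eq_iff[OF box three_not_dvd_two_power] by simp
  finally show ?thesis .
qed

lemma card_far_points_vertices:
  assumes "1 \<le> n"
  shows "card (far_points (2 ^ n) \<inter> AT_vertices n) = (if n = 1 then 3 else 6)"
proof (cases "n = 1")
  case True
  then have "far_points (2 ^ n) \<inter> AT_vertices n = {(0, 1), (1, 1), (1, 0)}"
    by (auto simp: AT_vertices_eq far_points_def)
  with True show ?thesis
    by simp
next
  case False
  then have "4 \<le> (2 ^ n :: int)"
    using assms power_increasing[of 2 n "2::int"] by simp
  then show ?thesis
    using False far_points_subset[of "2 ^ n"] card_far_points[of "2 ^ n"] three_not_dvd_two_power
    by (simp add: AT_vertices_eq Int_absorb2)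
qed

theorem proposition4:
  fixes n :: nat
  assumes "n \<ge> 1"
  shows "AT_oriented_diameter n = enat (2 ^ n - 1)
    \<and> card {v \<in> AT_vertices n. AT_dist n (0, 0) v = enat (2 ^ n - 1)} = (if n = 1 then 3 else 6)"
proof -
  have far: "{v \<in> AT_vertices n. AT_dist n (0, 0) v = enat (2 ^ n - 1)} = far_points (2 ^ n) \<inter> AT_vertices n"
    using AT_dist_origin_eq_iff by auto
  have card: "card (far_points (2 ^ n) \<inter> AT_vertices n) = (if n = 1 then 3 else 6)"
    using card_far_points_vertices[OF assms] .
  then have "far_points (2 ^ n) \<inter> AT_vertices n \<noteq> {}"
    by (intro notI) (simp split: if_splits)
  then obtain v where "v \<in> AT_vertices n" "AT_dist n (0, 0) v = enat (2 ^ n - 1)"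
    using AT_dist_origin_eq_iff by blast
  moreover have "(0, 0) \<in> AT_vertices n"
    by (simp add: AT_vertices_eq)
  ultimately have "AT_oriented_diameter n = enat (2 ^ n - 1)"
    unfolding AT_oriented_diameter_def using AT_dist_le
    by (intro antisym SUP_least SUP_upper2[of "(0, 0)"] SUP_upper2[of v]) auto
  with far card show ?thesis
    by simp
qed

end
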